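(* Let $\mathbf{B}_{\mathrm{lat}}$ be the (opposite) incidence coalgebra of the lattices of noncrossing partitions and $\mathbf{B}_{\mathrm{opd}}$ the block-substitution bialgebra of noncrossing partitions (both defined in the context). The linear map $\Phi:\mathbf{B}_{\mathrm{lat}}\to\mathbf{B}_{\mathrm{opd}}$ defined by $\Phi(\llbracket P,Q\rrbracket)=P/Q$ is a coalgebra homomorphism.
   Context: For $n\geq1$, $\operatorname{NCP}(n)$ denotes the set of noncrossing partitions of $[n]$ (no $a<c<b<d$ with $a,b$ in one block and $c,d$ in another), ordered by refinement: $P\leq Q$ if each block of $Q$ is a union of blocks of $P$. Partitions of finite linearly ordered sets are identified with partitions of $[m]$ via the order-preserving bijection, and $P_{|X}$ denotes the induced partition on $X$. $\mathbf{B}_{\mathrm{opd}}$ is the free commutative unital algebra generated by all nonempty noncrossing partitions; for $P\leq Q$ in $\operatorname{NCP}(n)$ with $Q=\{\tau_1,\dots,\tau_l\}$, $P/Q:=P_{|\tau_1}\cdots P_{|\tau_l}\in\mathbf{B}_{\mathrm{opd}}$. Its coproduct is $\delta(P)=\sum_{Q\in\operatorname{NCP}(n),\,Q\geq P}Q\otimes P/Q$, extended multiplicatively, and its counit is $\varepsilon(P)=1$ if $P$ has exactly one block and $0$ otherwise. $\mathbf{B}_{\mathrm{lat}}$ is the vector space with basis all intervals $\llbracket P,Q\rrbracket=\{M: P\leq M\leq Q\}$ with $P\leq Q$ in $\operatorname{NCP}(n)$, $n\geq1$, with coproduct $\llbracket P,Q\rrbracket\mapsto\sum_{M\in\llbracket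 P,Q\rrbracket}\llbracket M,Q\rrbracket\otimes\llbracket P,M\rrbracket$ (the opposite of the usual incidence coproduct) and counit $\llbracket P,Q\rrbracket\mapsto\delta_{P,Q}$. *)

theory Defs
  imports Main "HOL-Library.Poly_Mapping" "HOL-Library.Multiset"
    "HOL-Library.Product_Plus" "HOL-Library.Disjoint_Sets"
begin

type_synonym ptn = "nat set set"

definition noncrossing :: "ptn \<Rightarrow> bool" where
  "noncrossing P \<longleftrightarrow>
     \<not> (\<exists>B1\<in>P. \<exists>B2\<in>P. B1 \<noteq> B2 \<and>
          (\<exists>a b c d. a \<in> B1 \<and> b \<in> B1 \<and> c \<in> B2 \<and> d \<in> B2 \<and> a < c \<and> c < b \<and> b < d))"

definition NCP :: "nat \<Rightarrow> ptn set" where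
  "NCP n = {P. partition_on {1..n} P \<and> noncrossing P}"

definition refines :: "ptn \<Rightarrow> ptn \<Rightarrow> bool" where
  "refines P Q \<longleftrightarrow> (\<forall>\<tau>\<in>Q. \<exists>S\<subseteq>P. \<tau> = \<Union>S)"

text \<open>Order-preserving identification of a finite set X \<subseteq> nat with [|X|].\<close>
definition std_map :: "nat set \<Rightarrow> nat \<Rightarrow> nat" where
  "std_map X x = card {y \<in> X. y \<le> x}"

text \<open>Induced partition P|X, transported to a partition of [|X|].\<close>
definition restr :: "ptn \<Rightarrow> nat set \<Rightarrow> ptn" where
  "restr P X = (\<lambda>B. std_map X ` B) ` {B \<inter> X | B. B \<in> P \<and> B \<inter> X \<noteq> {}}"

text \<open>Elements of the free 'k-vector space on a basis 'a: finitely supported maps.\<close>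
definition lin_ext :: "('a \<Rightarrow> ('b \<Rightarrow>\<^sub>0 'k::comm_semiring_1)) \<Rightarrow> ('a \<Rightarrow>\<^sub>0 'k) \<Rightarrow> ('b \<Rightarrow>\<^sub>0 'k)" where
  "lin_ext f x = (\<Sum>a\<in>Poly_Mapping.keys x. Poly_Mapping.map (\<lambda>c. Poly_Mapping.lookup x a * c) (f a))"

definition lin_fun :: "('a \<Rightarrow> 'k::comm_semiring_1) \<Rightarrow> ('a \<Rightarrow>\<^sub>0 'k) \<Rightarrow> 'k" where
  "lin_fun f x = (\<Sum>a\<in>Poly_Mapping.keys x. Poly_Mapping.lookup x a * f a)"

text \<open>B_opd is the polynomial algebra on the generators (nonempty noncrossing partitions):
  a monomial is a multiset of generators, and B_opd = the finitely supported maps on monomials, with the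
  convolution product (the monoid algebra of the free commutative monoid).
  B_opd \<otimes> B_opd is finitely supported maps on pairs of monomials, again with the convolution product,
  which is the tensor product algebra.\<close>

definition gens :: "ptn set" where
  "gens = (\<Union>n\<in>{n. n \<ge> 1}. NCP n)"

text \<open>P/Q = P|tau_1 ... P|tau_l, a monomial.\<close>
definition quot :: "ptn \<Rightarrow> ptn \<Rightarrow> ptn multiset" where
  "quot P Q = image_mset (\<lambda>\<tau>. restr P \<tau>) (mset_set Q)"

definition opd_delta_gen :: "ptn \<Rightarrow> (ptn multiset \<times> ptn multiset \<Rightarrow>\<^sub>0 'k::comm_semiring_1)" where
  "opd_delta_gen P =
     (\<Sum>Q\<in>{Q \<in> NCP (card (\<Union>P)). refines P Q}. Poly_Mapping.single ({#Q#}, quot P Q) 1)"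

definition opd_delta_mono :: "ptn multiset \<Rightarrow> (ptn multiset \<times> ptn multiset \<Rightarrow>\<^sub>0 'k::comm_semiring_1)" where
  "opd_delta_mono M = prod_mset (image_mset opd_delta_gen M)"

definition opd_delta :: "(ptn multiset \<Rightarrow>\<^sub>0 'k::comm_semiring_1) \<Rightarrow> (ptn multiset \<times> ptn multiset \<Rightarrow>\<^sub>0 'k)" where
  "opd_delta = lin_ext opd_delta_mono"

definition opd_eps_gen :: "ptn \<Rightarrow> 'k::comm_semiring_1" where
  "opd_eps_gen P = (if card P = 1 then 1 else 0)"

definition opd_eps :: "(ptn multiset \<Rightarrow>\<^sub>0 'k::comm_semiring_1) \<Rightarrow> 'k" where
  "opd_eps = lin_fun (\<lambda>M. prod_mset (image_mset opd_eps_gen M))"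

text \<open>Basis: intervals [[P,Q]], represented by the pair (P,Q).\<close>
definition lat_basis :: "(ptn \<times> ptn) set" where
  "lat_basis = {(P, Q). \<exists>n\<ge>1. P \<in> NCP n \<and> Q \<in> NCP n \<and> refines P Q}"

definition interval :: "ptn \<Rightarrow> ptn \<Rightarrow> ptn set" where
  "interval P Q = {M \<in> NCP (card (\<Union>P)). refines P M \<and> refines M Q}"

definition lat_delta_basis :: "ptn \<times> ptn \<Rightarrow> ((ptn \<times> ptn) \<times> (ptn \<times> ptn) \<Rightarrow>\<^sub>0 'k::comm_semiring_1)" where
  "lat_delta_basis I = (case I of (P, Q) \<Rightarrow>
     (\<Sum>M\<in>interval P Q. Poly_Mapping.single ((M, Q), (P, M)) 1))"

definition lat_delta :: "((ptn \<times> ptn) \<Rightarrow>\<^sub>0 'k::comm_semiring_1) \<Rightarrow> ((ptn \<times> ptn) \<times> (ptn \<times> ptn) \<Rightarrow>\<^sub>0 'k)" where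
  "lat_delta = lin_ext lat_delta_basis"

definition lat_eps :: "((ptn \<times> ptn) \<Rightarrow>\<^sub>0 'k::comm_semiring_1) \<Rightarrow> 'k" where
  "lat_eps = lin_fun (\<lambda>(P, Q). if P = Q then 1 else 0)"

definition Phi :: "((ptn \<times> ptn) \<Rightarrow>\<^sub>0 'k::comm_semiring_1) \<Rightarrow> (ptn multiset \<Rightarrow>\<^sub>0 'k)" where
  "Phi = lin_ext (\<lambda>(P, Q). Poly_Mapping.single (quot P Q) 1)"

definition Phi_tensor :: "((ptn \<times> ptn) \<times> (ptn \<times> ptn) \<Rightarrow>\<^sub>0 'k::comm_semiring_1)
     \<Rightarrow> (ptn multiset \<times> ptn multiset \<Rightarrow>\<^sub>0 'k)" where
  "Phi_tensor = lin_ext (\<lambda>((P, Q), (P', Q')). Poly_Mapping.single (quot P Q, quot P' Q') 1)"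

end

theory Submission
  imports Defs "HOL-Library.FuncSet"
begin

text \<open>Both sides are linear, so it suffices to treat a basis interval \<lbrakk>P, Q\<rbrakk>. Since \<delta> is
  multiplicative, \<delta>(P/Q) is the product over the blocks \<tau> of Q of the sums of R \<otimes> (P|\<tau>)/R over
  all R \<ge> P|\<tau>, and expanding the product gives a sum over families (R\<tau>) indexed by Q.
  Restriction M \<mapsto> (M|\<tau>) is a bijection from \<lbrakk>P, Q\<rbrakk> onto these families: its inverse relabels
  each R\<tau> back into \<tau> and collects all the blocks, which is noncrossing because Q and every R\<tau>
  are. Under this bijection the product of the R\<tau> is M/Q, and the product of the (P|\<tau>)/(M|\<tau>) is
  P/M because restricting twice is restricting once. For the counit, \<epsilon>(P/Q) is the product of the
  \<epsilon>(P|\<tau>), which is 1 exactly when every block of Q is a block of P, that is, when P = Q.\<close>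

section \<open>Linear extensions\<close>

lemma lookup_lin_ext:
  "Poly_Mapping.lookup (lin_ext f x) k =
     (\<Sum>a\<in>Poly_Mapping.keys x. Poly_Mapping.lookup x a * Poly_Mapping.lookup (f a) k)"
  unfolding lin_ext_def lookup_sum
  by (intro sum.cong refl) (auto simp: map.rep_eq when_def in_keys_iff)

lemma lookup_lin_ext_superset:
  assumes "finite S" "Poly_Mapping.keys x \<subseteq> S"
  shows "Poly_Mapping.lookup (lin_ext f x) k =
           (\<Sum>a\<in>S. Poly_Mapping.lookup x a * Poly_Mapping.lookup (f a) k)"
  unfolding lookup_lin_ext using assms
  by (intro sum.mono_neutral_left) (auto simp: in_keys_iff)

lemma lin_fun_superset:
  assumes "finite S" "Poly_Mapping.keys x \<subseteq> S"
  shows "lin_fun f x = (\<Sum>a\<in>S. Poly_Mapping.lookup x a * f a)"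
  unfolding lin_fun_def using assms
  by (intro sum.mono_neutral_left) (auto simp: in_keys_iff)

lemma keys_lin_ext_subset:
  "Poly_Mapping.keys (lin_ext f x) \<subseteq> (\<Union>a\<in>Poly_Mapping.keys x. Poly_Mapping.keys (f a))"
proof
  fix b assume "b \<in> Poly_Mapping.keys (lin_ext f x)"
  then have "(\<Sum>a\<in>Poly_Mapping.keys x. Poly_Mapping.lookup x a * Poly_Mapping.lookup (f a) b) \<noteq> 0"
    by (simp add: in_keys_iff lookup_lin_ext)
  then obtain a where "a \<in> Poly_Mapping.keys x" "Poly_Mapping.lookup (f a) b \<noteq> 0"
    by (metis (no_types, lifting) mult_zero_right sum.neutral)
  then show "b \<in> (\<Union>a\<in>Poly_Mapping.keys x. Poly_Mapping.keys (f a))"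
    by (auto simp: in_keys_iff)
qed

lemma lin_fun_lin_ext: "lin_fun g (lin_ext f x) = lin_fun (\<lambda>a. lin_fun g (f a)) x"
proof -
  define K where "K = (\<Union>a\<in>Poly_Mapping.keys x. Poly_Mapping.keys (f a))"
  have K: "finite K" "\<And>a. a \<in> Poly_Mapping.keys x \<Longrightarrow> Poly_Mapping.keys (f a) \<subseteq> K"
    unfolding K_def by auto
  have "lin_fun g (lin_ext f x) =
     (\<Sum>b\<in>K. (\<Sum>a\<in>Poly_Mapping.keys x. Poly_Mapping.lookup x a * Poly_Mapping.lookup (f a) b) * g b)"
    using K_def keys_lin_ext_subset by (subst lin_fun_superset[OF K(1)]) (simp_all add: lookup_lin_ext)
  also have "\<dots> = (\<Sum>a\<in>Poly_Mapping.keys x.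
                     Poly_Mapping.lookup x a * (\<Sum>b\<in>K. Poly_Mapping.lookup (f a) b * g b))"
    by (simp add: sum_distrib_left sum_distrib_right mult.assoc sum.swap[of _ K])
  also have "\<dots> = lin_fun (\<lambda>a. lin_fun g (f a)) x"
    unfolding lin_fun_def[of "\<lambda>a. lin_fun g (f a)"]
    by (intro sum.cong refl arg_cong2[where f="(*)"]) (metis K lin_fun_superset)
  finally show ?thesis .
qed

lemma lin_ext_lin_ext: "lin_ext g (lin_ext f x) = lin_ext (\<lambda>a. lin_ext g (f a)) x"
proof (rule poly_mapping_eqI)
  fix k
  have lookup_as_lin_fun:
    "Poly_Mapping.lookup (lin_ext g y) k = lin_fun (\<lambda>b. Poly_Mapping.lookup (g b) k) y" for y
    by (simp add: lin_fun_def lookup_lin_ext)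
  show "Poly_Mapping.lookup (lin_ext g (lin_ext f x)) k =
             Poly_Mapping.lookup (lin_ext (\<lambda>a. lin_ext g (f a)) x) k"
    by (simp only: lookup_as_lin_fun lin_fun_lin_ext) (simp add: lin_fun_def lookup_lin_ext)
qed

lemma lin_ext_cong:
  "(\<And>a. a \<in> Poly_Mapping.keys x \<Longrightarrow> f a = g a) \<Longrightarrow> lin_ext f x = lin_ext g x"
  unfolding lin_ext_def by (intro sum.cong refl) auto

lemma lin_fun_cong:
  "(\<And>a. a \<in> Poly_Mapping.keys x \<Longrightarrow> f a = g a) \<Longrightarrow> lin_fun f x = lin_fun g x"
  unfolding lin_fun_def by (intro sum.cong refl) auto

lemma lin_ext_single_one [simp]: "lin_ext f (Poly_Mapping.single a 1) = f a"
  by (rule poly_mapping_eqI) (simp add: lookup_lin_ext)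

lemma lin_fun_single_one [simp]: "lin_fun f (Poly_Mapping.single a 1) = f a"
  by (simp add: lin_fun_def)

lemma lin_ext_add: "lin_ext f (x + y) = lin_ext f x + lin_ext f y"
proof (rule poly_mapping_eqI)
  fix k
  let ?S = "Poly_Mapping.keys x \<union> Poly_Mapping.keys y"
  have S: "finite ?S" "Poly_Mapping.keys (x + y) \<subseteq> ?S"
    by (auto simp: in_keys_iff lookup_add)
  show "Poly_Mapping.lookup (lin_ext f (x + y)) k = Poly_Mapping.lookup (lin_ext f x + lin_ext f y) k"
    by (simp add: lookup_add lookup_lin_ext_superset[OF S] lookup_lin_ext_superset[OF S(1)]
        distrib_right sum.distrib)
qed

lemma lin_ext_zero: "lin_ext f 0 = 0"
  by (simp add: lin_ext_def)

lemma lin_ext_sum: "lin_ext f (\<Sum>i\<in>I. x i) = (\<Sum>i\<in>I. lin_ext f (x i))"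
  by (induction I rule: infinite_finite_induct) (auto simp: lin_ext_add lin_ext_zero)

lemma prod_single_one:
  "(\<Prod>i\<in>I. Poly_Mapping.single (k i) (1::'b::comm_semiring_1)) =
     Poly_Mapping.single (\<Sum>i\<in>I. (k i :: 'a::comm_monoid_add)) 1"
  by (induction I rule: infinite_finite_induct) (auto simp: mult_single)

section \<open>Partitions and noncrossing partitions\<close>

lemma image_blocks_inverse:
  assumes "\<And>x. x \<in> A \<Longrightarrow> g (f x) = x" "\<Union>Bs \<subseteq> A"
  shows "(`) g ` (`) f ` Bs = Bs"
proof -
  have "g ` f ` B = (\<lambda>x. x) ` B" if "B \<in> Bs" for B
    unfolding image_image using assms that by (intro image_cong) auto
  then have "(`) g ` (`) f ` Bs = (\<lambda>B. B) ` Bs"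
    unfolding image_image by (intro image_cong) auto
  then show ?thesis
    by simp
qed

lemma partition_on_image_blocks:
  assumes "partition_on A P" "inj_on f A"
  shows "partition_on (f ` A) ((`) f ` P)"
proof -
  have "(`) f ` P - {{}} = (`) f ` P"
    using partition_onD3[OF assms(1)] by auto
  then show ?thesis
    using partition_on_inj_image[OF assms] by simp
qed

lemma partition_on_UN_blocks:
  assumes "partition_on A Q" and "\<And>\<tau>. \<tau> \<in> Q \<Longrightarrow> partition_on \<tau> (N \<tau>)"
  shows "partition_on A (\<Union>\<tau>\<in>Q. N \<tau>)"
proof (rule partition_onI)
  show "\<Union>(\<Union>\<tau>\<in>Q. N \<tau>) = A"
    using partition_onD1[OF assms(1)] partition_onD1[OF assms(2)] by blast
  show "{} \<notin> (\<Union>\<tau>\<in>Q. N \<tau>)"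
    using partition_onD3[OF assms(2)] by blast
  fix \<sigma>1 \<sigma>2 assume "\<sigma>1 \<in> (\<Union>\<tau>\<in>Q. N \<tau>)" "\<sigma>2 \<in> (\<Union>\<tau>\<in>Q. N \<tau>)" "\<sigma>1 \<noteq> \<sigma>2"
  then obtain \<tau>1 \<tau>2 where \<tau>: "\<tau>1 \<in> Q" "\<tau>2 \<in> Q" and \<sigma>: "\<sigma>1 \<in> N \<tau>1" "\<sigma>2 \<in> N \<tau>2"
    by blast
  show "disjnt \<sigma>1 \<sigma>2"
  proof (cases "\<tau>1 = \<tau>2")
    case True
    then show ?thesis
      using pairwiseD[OF partition_onD2[OF assms(2)[OF \<tau>(1)]]] \<sigma> \<open>\<sigma>1 \<noteq> \<sigma>2\<close> by simp
  next
    case False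
    have "\<sigma>1 \<subseteq> \<tau>1" "\<sigma>2 \<subseteq> \<tau>2"
      using partition_onD1[OF assms(2)] \<tau> \<sigma> by blast+
    then show ?thesis
      using pairwiseD[OF partition_onD2[OF assms(1)] \<tau> False] disjnt_subset1 disjnt_subset2 by blast
  qed
qed

lemma partition_on_block_unique:
  assumes "partition_on A Q" "\<tau> \<in> Q" "\<tau>' \<in> Q" "\<sigma> \<noteq> {}" "\<sigma> \<subseteq> \<tau>" "\<sigma> \<subseteq> \<tau>'"
  shows "\<tau> = \<tau>'"
  using partition_onD2[OF assms(1)] assms(2-6) by (auto dest: disjointD)

lemma partition_on_eq_if_subset:
  assumes "partition_on A P" "partition_on A Q" "Q \<subseteq> P"
  shows "P = Q"
proof (intro equalityI subsetI)
  fix B assume "B \<in> P"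
  then obtain x where "x \<in> B" "x \<in> A"
    using partition_onD1[OF assms(1)] partition_onD3[OF assms(1)] by (metis UnionI ex_in_conv)
  then obtain \<tau> where "\<tau> \<in> Q" "x \<in> \<tau>"
    using partition_onD1[OF assms(2)] by auto
  then have "B = \<tau>"
    using partition_on_block_unique[OF assms(1) \<open>B \<in> P\<close>, of \<tau> "{x}"] assms(3) \<open>x \<in> B\<close> by auto
  then show "B \<in> Q"
    using \<open>\<tau> \<in> Q\<close> by simp
qed (use assms(3) in blast)

lemma blocks_within_UN_blocks:
  assumes "partition_on A Q" "\<tau> \<in> Q" and "\<And>\<tau>. \<tau> \<in> Q \<Longrightarrow> partition_on \<tau> (N \<tau>)"
  shows "{\<sigma> \<in> (\<Union>\<tau>\<in>Q. N \<tau>). \<sigma> \<subseteq> \<tau>} = N \<tau>"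
proof (intro equalityI subsetI)
  fix \<sigma> assume "\<sigma> \<in> {\<sigma> \<in> (\<Union>\<tau>\<in>Q. N \<tau>). \<sigma> \<subseteq> \<tau>}"
  then obtain \<tau>' where \<tau>': "\<tau>' \<in> Q" "\<sigma> \<in> N \<tau>'" "\<sigma> \<subseteq> \<tau>"
    by blast
  have "\<sigma> \<noteq> {}" "\<sigma> \<subseteq> \<tau>'"
    using partition_onD3[OF assms(3)] partition_onD1[OF assms(3)] \<tau>' by blast+
  then have "\<tau>' = \<tau>"
    using partition_on_block_unique[OF assms(1) \<tau>'(1) assms(2)] \<tau>'(3) by blast
  then show "\<sigma> \<in> N \<tau>"
    using \<tau>'(2) by simp
qed (use assms(2) partition_onD1[OF assms(3)] in blast)

lemma refines_image_blocks:
  assumes "refines P Q"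
  shows "refines ((`) f ` P) ((`) f ` Q)"
  unfolding refines_def
proof
  fix \<tau>' assume "\<tau>' \<in> (`) f ` Q"
  then obtain \<tau> where "\<tau> \<in> Q" "\<tau>' = f ` \<tau>"
    by blast
  moreover obtain S where "S \<subseteq> P" "\<tau> = \<Union>S"
    using assms \<open>\<tau> \<in> Q\<close> unfolding refines_def by blast
  ultimately show "\<exists>S'\<subseteq>(`) f ` P. \<tau>' = \<Union>S'"
    by (intro exI[of _ "(`) f ` S"]) auto
qed

lemma refines_subset_left:
  assumes "refines P' N" "P' \<subseteq> P"
  shows "refines P N"
  unfolding refines_def
proof
  fix \<sigma> assume "\<sigma> \<in> N"
  then obtain S where "S \<subseteq> P'" "\<sigma> = \<Union>S"
    using assms(1) unfolding refines_def by auto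
  then show "\<exists>S\<subseteq>P. \<sigma> = \<Union>S"
    using assms(2) by (intro exI[of _ S]) auto
qed

lemma refines_block_subset:
  assumes "partition_on A P" "refines P Q" "\<tau> \<in> Q" "B \<in> P" "B \<inter> \<tau> \<noteq> {}"
  shows "B \<subseteq> \<tau>"
proof -
  obtain S where S: "S \<subseteq> P" "\<tau> = \<Union>S"
    using assms(2,3) unfolding refines_def by auto
  then obtain B' where "B' \<in> S" "B \<inter> B' \<noteq> {}"
    using assms(5) by auto
  then have "B' = B"
    using partition_onD2[OF assms(1)] assms(4) S(1) by (auto dest: disjointD)
  then show ?thesis
    using S \<open>B' \<in> S\<close> by auto
qed

lemma refines_imp_block_subset:
  assumes "partition_on A P" "partition_on A Q" "refines P Q" "B \<in> P"
  obtains \<tau> where "\<tau> \<in> Q" "B \<subseteq> \<tau>"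
proof -
  obtain x where "x \<in> B" "x \<in> A"
    using partition_onD1[OF assms(1)] partition_onD3[OF assms(1)] assms(4) by (metis UnionI ex_in_conv)
  then obtain \<tau> where "\<tau> \<in> Q" "x \<in> \<tau>"
    using partition_onD1[OF assms(2)] by auto
  then show thesis
    using that refines_block_subset[OF assms(1,3) _ assms(4)] \<open>x \<in> B\<close> by blast
qed

lemma UN_blocks_within:
  assumes "partition_on A M" "partition_on A Q" "refines M Q"
  shows "(\<Union>\<tau>\<in>Q. {\<sigma> \<in> M. \<sigma> \<subseteq> \<tau>}) = M"
proof (intro equalityI subsetI)
  fix \<sigma> assume "\<sigma> \<in> M"
  then obtain \<tau> where "\<tau> \<in> Q" "\<sigma> \<subseteq> \<tau>"
    by (rule refines_imp_block_subset[OF assms])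
  with \<open>\<sigma> \<in> M\<close> show "\<sigma> \<in> (\<Union>\<tau>\<in>Q. {\<sigma> \<in> M. \<sigma> \<subseteq> \<tau>})"
    by blast
qed blast

lemma blocks_within_disjoint:
  assumes "partition_on A M" "partition_on A Q" "\<tau> \<in> Q" "\<tau>' \<in> Q" "\<tau> \<noteq> \<tau>'"
  shows "{\<sigma> \<in> M. \<sigma> \<subseteq> \<tau>} \<inter> {\<sigma> \<in> M. \<sigma> \<subseteq> \<tau>'} = {}"
proof -
  have False if "\<sigma> \<in> M" "\<sigma> \<subseteq> \<tau>" "\<sigma> \<subseteq> \<tau>'" for \<sigma>
    using partition_on_block_unique[OF assms(2-4) _ that(2,3)] partition_onD3[OF assms(1)] that(1) assms(5)
    by auto
  then show ?thesis
    by auto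
qed

lemma noncrossingD:
  assumes "noncrossing P" "B1 \<in> P" "B2 \<in> P" "B1 \<noteq> B2"
    "a \<in> B1" "b \<in> B1" "c \<in> B2" "d \<in> B2" "a < c" "c < b"
  shows "\<not> b < d"
  using assms unfolding noncrossing_def by metis

lemma noncrossing_image_blocks:
  assumes mono: "strict_mono_on (\<Union>P) f" and "noncrossing P"
  shows "noncrossing ((`) f ` P)"
  unfolding noncrossing_def
proof clarify
  fix B1 B2 a b c d
  assume B: "B1 \<in> P" "B2 \<in> P" "f ` B1 \<noteq> f ` B2" and a: "a \<in> B1" and b: "b \<in> B1"
    and c: "c \<in> B2" and d: "d \<in> B2" and "f a < f c" "f c < f b" "f b < f d"
  moreover have "x \<in> \<Union>P" if "x \<in> B1 \<or> x \<in> B2" for x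
    using B that by blast
  ultimately have "a < c" "c < b" "b < d"
    using strict_mono_on_less[OF mono] a b c d by simp_all
  then show False
    using noncrossingD[OF \<open>noncrossing P\<close> B(1,2) _ a b c d] B(3) by blast
qed

lemma noncrossing_Int_blocks:
  assumes "noncrossing P"
  shows "noncrossing ((\<inter>) X ` P - {{}})"
  unfolding noncrossing_def
proof (intro notI, elim bexE exE conjE)
  fix C1 C2 a b c d
  assume "C1 \<in> (\<inter>) X ` P - {{}}" "C2 \<in> (\<inter>) X ` P - {{}}" "C1 \<noteq> C2"
    and elems: "a \<in> C1" "b \<in> C1" "c \<in> C2" "d \<in> C2" "a < c" "c < b" "b < d"
  then obtain B1 B2 where "B1 \<in> P" "B2 \<in> P" "C1 = X \<inter> B1" "C2 = X \<inter> B2" "B1 \<noteq> B2"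
    by auto
  then show False
    using noncrossingD[OF assms, of B1 B2 a b c d] elems by auto
qed

lemma noncrossing_UN_blocks:
  assumes "noncrossing Q" and "\<And>\<tau>. \<tau> \<in> Q \<Longrightarrow> noncrossing (N \<tau>)"
    and "\<And>\<tau>. \<tau> \<in> Q \<Longrightarrow> \<Union>(N \<tau>) \<subseteq> \<tau>"
  shows "noncrossing (\<Union>\<tau>\<in>Q. N \<tau>)"
  unfolding noncrossing_def
proof clarify
  fix \<tau>1 \<tau>2 \<sigma>1 \<sigma>2 a b c d
  assume \<tau>: "\<tau>1 \<in> Q" "\<tau>2 \<in> Q" and \<sigma>: "\<sigma>1 \<in> N \<tau>1" "\<sigma>2 \<in> N \<tau>2" "\<sigma>1 \<noteq> \<sigma>2"
    and elems: "a \<in> \<sigma>1" "b \<in> \<sigma>1" "c \<in> \<sigma>2" "d \<in> \<sigma>2" and "a < c" "c < b" "b < d"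
  show False
  proof (cases "\<tau>1 = \<tau>2")
    case True
    with \<sigma> have "\<sigma>2 \<in> N \<tau>1" by simp
    then show False
      using noncrossingD[OF assms(2)[OF \<tau>(1)] \<sigma>(1) _ \<sigma>(3) elems] \<sigma>
        \<open>a < c\<close> \<open>c < b\<close> \<open>b < d\<close> by blast
  next
    case False
    have "a \<in> \<tau>1" "b \<in> \<tau>1" "c \<in> \<tau>2" "d \<in> \<tau>2"
      using elems \<sigma> assms(3)[OF \<tau>(1)] assms(3)[OF \<tau>(2)] by auto
    then show False
      using noncrossingD[OF assms(1) \<tau> False] \<open>a < c\<close> \<open>c < b\<close> \<open>b < d\<close> by blast
  qed
qed

section \<open>Restriction to a subset\<close>

lemma strict_mono_on_the_inv_into:
  fixes f :: "'a::linorder \<Rightarrow> 'b::linorder"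
  assumes "strict_mono_on A f"
  shows "strict_mono_on (f ` A) (the_inv_into A f)"
proof (rule strict_mono_onI)
  have inj: "inj_on f A" by (rule strict_mono_on_imp_inj_on[OF assms])
  fix r s assume "r \<in> f ` A" "s \<in> f ` A" "r < s"
  then show "the_inv_into A f r < the_inv_into A f s"
    using strict_mono_on_less[OF assms] by (auto simp: the_inv_into_f_f[OF inj])
qed

lemma strict_mono_on_std_map: "finite X \<Longrightarrow> strict_mono_on X (std_map X)"
  unfolding std_map_def by (intro strict_mono_onI psubset_card_mono) (auto simp: set_eq_iff, force)

lemma std_map_image:
  assumes "finite X"
  shows "std_map X ` X = {1..card X}"
proof (rule card_subset_eq)
  have "1 \<le> card {y \<in> X. y \<le> x} \<and> card {y \<in> X. y \<le> x} \<le> card X" if "x \<in> X" for x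
    using assms that by (auto simp: Suc_le_eq card_gt_0_iff intro!: card_mono)
  then show "std_map X ` X \<subseteq> {1..card X}"
    unfolding std_map_def by auto
  show "card (std_map X ` X) = card {1..card X}"
    using card_image[OF strict_mono_on_imp_inj_on[OF strict_mono_on_std_map[OF assms]]] by simp
qed simp

lemma std_map_std_map:
  assumes "finite X" "Y \<subseteq> X" "y \<in> Y"
  shows "std_map (std_map X ` Y) (std_map X y) = std_map Y y"
proof -
  have mono: "strict_mono_on Y (std_map X)"
    using strict_mono_on_std_map[OF assms(1)] assms(2) by (rule monotone_on_subset)
  have "{z \<in> std_map X ` Y. z \<le> std_map X y} = std_map X ` {z \<in> Y. z \<le> y}"
    using strict_mono_on_less_eq[OF mono _ assms(3)] by auto
  then show ?thesis
    unfolding std_map_def[of "std_map X ` Y"]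
    using card_image[OF inj_on_subset[OF strict_mono_on_imp_inj_on[OF mono]]]
    by (simp add: std_map_def)
qed

lemma inj_on_image_std_map: "finite X \<Longrightarrow> inj_on ((`) (std_map X)) (Pow X)"
  by (rule inj_on_image_Pow[OF strict_mono_on_imp_inj_on[OF strict_mono_on_std_map]])

lemma restr_eq_image_blocks: "restr P X = (`) (std_map X) ` ((\<inter>) X ` P - {{}})"
  unfolding restr_def by blast

lemma restr_alt_def: "restr P X = (\<lambda>B. std_map X ` (B \<inter> X)) ` {B \<in> P. B \<inter> X \<noteq> {}}"
  unfolding restr_def by auto

lemma partition_on_restr:
  assumes "partition_on A P" "finite X" "X \<subseteq> A"
  shows "partition_on {1..card X} (restr P X)"
proof -
  have "partition_on X ((\<inter>) X ` P - {{}})"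
    using partition_on_restrict[OF assms(1), of X] assms(3) by (simp add: Int_absorb2)
  from partition_on_image_blocks[OF this strict_mono_on_imp_inj_on[OF strict_mono_on_std_map[OF assms(2)]]]
  show ?thesis
    by (simp add: restr_eq_image_blocks std_map_image[OF assms(2)])
qed

lemma noncrossing_restr:
  assumes "noncrossing P" "finite X"
  shows "noncrossing (restr P X)"
  unfolding restr_eq_image_blocks
  by (rule noncrossing_image_blocks[OF monotone_on_subset[OF strict_mono_on_std_map[OF assms(2)]]
        noncrossing_Int_blocks[OF assms(1)]]) auto

lemma refines_restr:
  assumes "refines P M"
  shows "refines (restr P X) (restr M X)"
  unfolding refines_def
proof
  fix C assume "C \<in> restr M X"
  then obtain \<sigma> where \<sigma>: "\<sigma> \<in> M" "C = std_map X ` (\<sigma> \<inter> X)"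
    unfolding restr_alt_def by auto
  obtain S where S: "S \<subseteq> P" "\<sigma> = \<Union>S"
    using assms \<sigma>(1) unfolding refines_def by auto
  let ?S' = "(\<lambda>B. std_map X ` (B \<inter> X)) ` {B \<in> S. B \<inter> X \<noteq> {}}"
  have "?S' \<subseteq> restr P X" "C = \<Union>?S'"
    unfolding restr_alt_def using S \<sigma> by auto
  then show "\<exists>S\<subseteq>restr P X. C = \<Union>S" by blast
qed

lemma restr_restr:
  assumes "finite X" "Y \<subseteq> X"
  shows "restr (restr P X) (std_map X ` Y) = restr P Y"
proof -
  let ?s = "std_map X"
  have inj: "inj_on ?s X"
    by (rule strict_mono_on_imp_inj_on[OF strict_mono_on_std_map[OF assms(1)]])
  have trace: "?s ` (B \<inter> X) \<inter> ?s ` Y = ?s ` (B \<inter> Y)" for B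
    using inj assms(2) by (auto simp: inj_on_def)
  have "{C \<in> restr P X. C \<inter> ?s ` Y \<noteq> {}} =
        (\<lambda>B. ?s ` (B \<inter> X)) ` {B \<in> P. B \<inter> X \<noteq> {} \<and> ?s ` (B \<inter> X) \<inter> ?s ` Y \<noteq> {}}"
    unfolding restr_alt_def[of P X] by auto
  also have "{B \<in> P. B \<inter> X \<noteq> {} \<and> ?s ` (B \<inter> X) \<inter> ?s ` Y \<noteq> {}} = {B \<in> P. B \<inter> Y \<noteq> {}}"
    unfolding trace using assms(2) by blast
  finally have "restr (restr P X) (?s ` Y) =
      (\<lambda>B. std_map (?s ` Y) ` (?s ` (B \<inter> X) \<inter> ?s ` Y)) ` {B \<in> P. B \<inter> Y \<noteq> {}}"
    unfolding restr_alt_def[of "restr P X"] by (simp add: image_image)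
  also have "\<dots> = (\<lambda>B. std_map Y ` (B \<inter> Y)) ` {B \<in> P. B \<inter> Y \<noteq> {}}"
    unfolding trace image_image using std_map_std_map[OF assms] by (intro image_cong refl) auto
  finally show ?thesis
    unfolding restr_alt_def[of P Y] .
qed

lemma restr_refined_block:
  assumes "partition_on A M" "refines M Q" "\<tau> \<in> Q"
  shows "restr M \<tau> = (`) (std_map \<tau>) ` {\<sigma> \<in> M. \<sigma> \<subseteq> \<tau>}"
proof -
  have "{B \<in> M. B \<inter> \<tau> \<noteq> {}} = {\<sigma> \<in> M. \<sigma> \<subseteq> \<tau>}"
    using refines_block_subset[OF assms] partition_onD3[OF assms(1)] by (auto simp: Int_absorb2)
  then show ?thesis
    unfolding restr_alt_def by (simp add: Int_absorb2)
qed

lemma card_restr_refined_block: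
  assumes "partition_on A M" "refines M Q" "\<tau> \<in> Q" "finite \<tau>"
  shows "card (restr M \<tau>) = card {\<sigma> \<in> M. \<sigma> \<subseteq> \<tau>}"
proof -
  have "inj_on ((`) (std_map \<tau>)) {\<sigma> \<in> M. \<sigma> \<subseteq> \<tau>}"
    using inj_on_image_std_map[OF assms(4)] by (rule inj_on_subset) auto
  then show ?thesis
    unfolding restr_refined_block[OF assms(1-3)] by (rule card_image)
qed

lemma NCP_partition_on: "P \<in> NCP n \<Longrightarrow> partition_on {1..n} P"
  by (simp add: NCP_def)

lemma NCP_noncrossing: "P \<in> NCP n \<Longrightarrow> noncrossing P"
  by (simp add: NCP_def)

lemma finite_NCP: "finite (NCP n)"
  using finitely_many_partition_on[of "{1..n}"] unfolding NCP_def
  by (rule finite_subset[rotated]) auto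

lemma finite_NCP_element: "P \<in> NCP n \<Longrightarrow> finite P"
  by (rule finite_elements[OF _ NCP_partition_on]) auto

lemma NCP_block_subset: "P \<in> NCP n \<Longrightarrow> B \<in> P \<Longrightarrow> B \<subseteq> {1..n}"
  using partition_onD1[OF NCP_partition_on] by blast

lemma finite_NCP_block: "P \<in> NCP n \<Longrightarrow> B \<in> P \<Longrightarrow> finite B"
  by (meson NCP_block_subset finite_atLeastAtMost finite_subset)

lemma card_Union_NCP: "P \<in> NCP n \<Longrightarrow> card (\<Union>P) = n"
  by (simp flip: partition_onD1[OF NCP_partition_on])

lemma NCP_restr:
  assumes "P \<in> NCP n" "X \<subseteq> {1..n}"
  shows "restr P X \<in> NCP (card X)"
  using assms finite_subset[OF assms(2)] partition_on_restr[OF NCP_partition_on] noncrossing_restr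
  unfolding NCP_def by auto

lemma interval_eq: "P \<in> NCP n \<Longrightarrow> interval P Q = {M \<in> NCP n. refines P M \<and> refines M Q}"
  unfolding interval_def by (simp add: card_Union_NCP)

section \<open>Intervals as products\<close>

definition coarsenings :: "ptn \<Rightarrow> nat \<Rightarrow> ptn set" where
  "coarsenings P n = {Q \<in> NCP n. refines P Q}"

lemma finite_coarsenings: "finite (coarsenings P n)"
  unfolding coarsenings_def using finite_NCP by simp

lemma restr_interval_inj:
  assumes P: "P \<in> NCP n" and Q: "Q \<in> NCP n"
  shows "inj_on (\<lambda>M. \<lambda>\<tau>\<in>Q. restr M \<tau>) (interval P Q)"
proof (rule inj_onI)
  fix M M' assume "M \<in> interval P Q" "M' \<in> interval P Q"
    and eq: "(\<lambda>\<tau>\<in>Q. restr M \<tau>) = (\<lambda>\<tau>\<in>Q. restr M' \<tau>)"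
  then have M: "partition_on {1..n} M" "refines M Q" and M': "partition_on {1..n} M'" "refines M' Q"
    using interval_eq[OF P] NCP_partition_on by auto
  have Qp: "partition_on {1..n} Q"
    using NCP_partition_on[OF Q] .
  have local_eq: "{\<sigma> \<in> M. \<sigma> \<subseteq> \<tau>} = {\<sigma> \<in> M'. \<sigma> \<subseteq> \<tau>}" if \<tau>: "\<tau> \<in> Q" for \<tau>
  proof -
    have inj: "inj_on ((`) (std_map \<tau>)) (Pow \<tau>)"
      by (rule inj_on_image_std_map[OF finite_NCP_block[OF Q \<tau>]])
    have "restr M \<tau> = restr M' \<tau>"
      using fun_cong[OF eq, of \<tau>] \<tau> by simp
    then have "(`) (std_map \<tau>) ` {\<sigma> \<in> M. \<sigma> \<subseteq> \<tau>} = (`) (std_map \<tau>) ` {\<sigma> \<in> M'. \<sigma> \<subseteq> \<tau>}"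
      unfolding restr_refined_block[OF M \<tau>] restr_refined_block[OF M' \<tau>] .
    then show ?thesis
      using inj_on_image_eq_iff[OF inj, of "{\<sigma> \<in> M. \<sigma> \<subseteq> \<tau>}" "{\<sigma> \<in> M'. \<sigma> \<subseteq> \<tau>}"] by auto
  qed
  have "M = (\<Union>\<tau>\<in>Q. {\<sigma> \<in> M. \<sigma> \<subseteq> \<tau>})"
    by (rule UN_blocks_within[OF M(1) Qp M(2), symmetric])
  also have "\<dots> = (\<Union>\<tau>\<in>Q. {\<sigma> \<in> M'. \<sigma> \<subseteq> \<tau>})"
    using local_eq by simp
  also have "\<dots> = M'"
    by (rule UN_blocks_within[OF M'(1) Qp M'(2)])
  finally show "M = M'" .
qed

lemma restr_interval_in_PiE:
  assumes P: "P \<in> NCP n" and Q: "Q \<in> NCP n" and M: "M \<in> interval P Q"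
  shows "(\<lambda>\<tau>\<in>Q. restr M \<tau>) \<in> (\<Pi>\<^sub>E \<tau>\<in>Q. coarsenings (restr P \<tau>) (card \<tau>))"
proof -
  have "M \<in> NCP n" "refines P M"
    using M interval_eq[OF P] by auto
  then show ?thesis
    unfolding coarsenings_def using NCP_restr NCP_block_subset[OF Q] refines_restr by auto
qed

lemma coarsening_of_restr_lift:
  assumes P: "partition_on A P" "refines P Q" and \<tau>: "\<tau> \<in> Q" "finite \<tau>"
    and R: "R \<in> coarsenings (restr P \<tau>) (card \<tau>)"
  obtains N where "partition_on \<tau> N" "noncrossing N" "refines P N" "(`) (std_map \<tau>) ` N = R"
proof
  let ?s = "std_map \<tau>" and ?i = "the_inv_into \<tau> (std_map \<tau>)"
  have mono: "strict_mono_on \<tau> ?s"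
    by (rule strict_mono_on_std_map[OF \<tau>(2)])
  have inj: "inj_on ?s \<tau>"
    by (rule strict_mono_on_imp_inj_on[OF mono])
  have img: "?s ` \<tau> = {1..card \<tau>}"
    by (rule std_map_image[OF \<tau>(2)])
  have inv_mono: "strict_mono_on {1..card \<tau>} ?i"
    using strict_mono_on_the_inv_into[OF mono] unfolding img .
  have inv_img: "?i ` {1..card \<tau>} = \<tau>"
    using the_inv_into_onto[OF inj] unfolding img .
  have R_part: "partition_on {1..card \<tau>} R" and R_nc: "noncrossing R"
    and R_coarse: "refines (restr P \<tau>) R"
    using R unfolding coarsenings_def NCP_def by auto
  have R_Union: "\<Union>R = {1..card \<tau>}"
    using partition_onD1[OF R_part] by simp
  show "partition_on \<tau> ((`) ?i ` R)"
    using partition_on_image_blocks[OF R_part strict_mono_on_imp_inj_on[OF inv_mono]]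
    unfolding inv_img .
  show "noncrossing ((`) ?i ` R)"
    by (rule noncrossing_image_blocks[OF _ R_nc]) (simp only: R_Union inv_mono)
  have "(`) ?i ` restr P \<tau> = {B \<in> P. B \<subseteq> \<tau>}"
    unfolding restr_refined_block[OF P \<tau>(1)]
    by (rule image_blocks_inverse[where A = \<tau>]) (auto simp: the_inv_into_f_f[OF inj])
  then have "refines {B \<in> P. B \<subseteq> \<tau>} ((`) ?i ` R)"
    using refines_image_blocks[OF R_coarse, of ?i] by simp
  then show "refines P ((`) ?i ` R)"
    by (rule refines_subset_left) blast
  show "(`) ?s ` (`) ?i ` R = R"
    using f_the_inv_into_f[OF inj] R_Union unfolding img
    by (intro image_blocks_inverse[where A = "{1..card \<tau>}"]) auto
qed

lemma restr_interval_surj: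
  assumes P: "P \<in> NCP n" and Q: "Q \<in> NCP n" and PQ: "refines P Q"
    and g: "g \<in> (\<Pi>\<^sub>E \<tau>\<in>Q. coarsenings (restr P \<tau>) (card \<tau>))"
  obtains M where "M \<in> interval P Q" "(\<lambda>\<tau>\<in>Q. restr M \<tau>) = g"
proof -
  have Pp: "partition_on {1..n} P" and Qp: "partition_on {1..n} Q"
    using NCP_partition_on[OF P] NCP_partition_on[OF Q] .
  have "\<forall>\<tau>\<in>Q. \<exists>N. partition_on \<tau> N \<and> noncrossing N \<and> refines P N \<and> (`) (std_map \<tau>) ` N = g \<tau>"
  proof
    fix \<tau> assume \<tau>: "\<tau> \<in> Q"
    show "\<exists>N. partition_on \<tau> N \<and> noncrossing N \<and> refines P N \<and> (`) (std_map \<tau>) ` N = g \<tau>"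
      by (rule coarsening_of_restr_lift[OF Pp PQ \<tau> finite_NCP_block[OF Q \<tau>] PiE_mem[OF g \<tau>]]) blast
  qed
  then obtain N where N_part: "\<And>\<tau>. \<tau> \<in> Q \<Longrightarrow> partition_on \<tau> (N \<tau>)"
    and N_nc: "\<And>\<tau>. \<tau> \<in> Q \<Longrightarrow> noncrossing (N \<tau>)"
    and N_fine: "\<And>\<tau>. \<tau> \<in> Q \<Longrightarrow> refines P (N \<tau>)"
    and N_restr: "\<And>\<tau>. \<tau> \<in> Q \<Longrightarrow> (`) (std_map \<tau>) ` N \<tau> = g \<tau>"
    by metis
  define M where "M = (\<Union>\<tau>\<in>Q. N \<tau>)"
  have N_Union: "\<Union>(N \<tau>) = \<tau>" if "\<tau> \<in> Q" for \<tau>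
    using partition_onD1[OF N_part[OF that]] by simp
  have M_part: "partition_on {1..n} M"
    unfolding M_def by (rule partition_on_UN_blocks[OF Qp N_part])
  have "noncrossing M"
    unfolding M_def using N_Union by (intro noncrossing_UN_blocks[OF NCP_noncrossing[OF Q] N_nc]) auto
  moreover have "refines P M"
    using N_fine unfolding M_def refines_def by blast
  moreover have M_coarse: "refines M Q"
    unfolding refines_def M_def using N_Union by blast
  ultimately have "M \<in> interval P Q"
    unfolding interval_eq[OF P] NCP_def using M_part by blast
  moreover have "restr M \<tau> = g \<tau>" if "\<tau> \<in> Q" for \<tau>
    using restr_refined_block[OF M_part M_coarse that] N_restr[OF that]
      blocks_within_UN_blocks[OF Qp that N_part] unfolding M_def by simp
  then have "(\<lambda>\<tau>\<in>Q. restr M \<tau>) = g"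
    using PiE_arb[OF g] by (intro ext) simp
  ultimately show thesis
    by (rule that)
qed

lemma restr_interval_bij:
  assumes "P \<in> NCP n" "Q \<in> NCP n" "refines P Q"
  shows "bij_betw (\<lambda>M. \<lambda>\<tau>\<in>Q. restr M \<tau>) (interval P Q)
           (\<Pi>\<^sub>E \<tau>\<in>Q. coarsenings (restr P \<tau>) (card \<tau>))"
  unfolding bij_betw_def
proof (intro conjI equalityI subsetI)
  show "inj_on (\<lambda>M. \<lambda>\<tau>\<in>Q. restr M \<tau>) (interval P Q)"
    by (rule restr_interval_inj[OF assms(1,2)])
next
  fix g assume "g \<in> (\<lambda>M. \<lambda>\<tau>\<in>Q. restr M \<tau>) ` interval P Q"
  then obtain M where "M \<in> interval P Q" "g = (\<lambda>\<tau>\<in>Q. restr M \<tau>)"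
    by (rule imageE)
  then show "g \<in> (\<Pi>\<^sub>E \<tau>\<in>Q. coarsenings (restr P \<tau>) (card \<tau>))"
    using restr_interval_in_PiE[OF assms(1,2)] by simp
next
  fix g assume "g \<in> (\<Pi>\<^sub>E \<tau>\<in>Q. coarsenings (restr P \<tau>) (card \<tau>))"
  then obtain M where "M \<in> interval P Q" "(\<lambda>\<tau>\<in>Q. restr M \<tau>) = g"
    by (rule restr_interval_surj[OF assms])
  then show "g \<in> (\<lambda>M. \<lambda>\<tau>\<in>Q. restr M \<tau>) ` interval P Q"
    by (metis image_eqI)
qed

section \<open>Coproduct and counit on intervals\<close>

lemma quot_eq_sum: "finite Q \<Longrightarrow> quot M Q = (\<Sum>\<tau>\<in>Q. {#restr M \<tau>#})"
  unfolding quot_def by (simp add: sum_unfold_sum_mset)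

lemma quot_restr_refined_block:
  assumes "partition_on A M" "refines M Q" "\<tau> \<in> Q" "finite \<tau>" "finite M"
  shows "quot (restr P \<tau>) (restr M \<tau>) = (\<Sum>\<sigma>\<in>{\<sigma> \<in> M. \<sigma> \<subseteq> \<tau>}. {#restr P \<sigma>#})"
proof -
  have inj: "inj_on ((`) (std_map \<tau>)) {\<sigma> \<in> M. \<sigma> \<subseteq> \<tau>}"
    using inj_on_image_std_map[OF assms(4)] by (rule inj_on_subset) auto
  have "quot (restr P \<tau>) (restr M \<tau>) =
      (\<Sum>C\<in>(`) (std_map \<tau>) ` {\<sigma> \<in> M. \<sigma> \<subseteq> \<tau>}. {#restr (restr P \<tau>) C#})"
    using assms(5) by (simp add: quot_eq_sum restr_refined_block[OF assms(1-3)])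
  also have "\<dots> = (\<Sum>\<sigma>\<in>{\<sigma> \<in> M. \<sigma> \<subseteq> \<tau>}. {#restr (restr P \<tau>) (std_map \<tau> ` \<sigma>)#})"
    by (rule sum.reindex[OF inj, unfolded comp_def])
  also have "\<dots> = (\<Sum>\<sigma>\<in>{\<sigma> \<in> M. \<sigma> \<subseteq> \<tau>}. {#restr P \<sigma>#})"
    using restr_restr[OF assms(4)] by (intro sum.cong) auto
  finally show ?thesis .
qed

lemma sum_quot_restr:
  assumes P: "P \<in> NCP n" and Q: "Q \<in> NCP n" and M: "M \<in> interval P Q"
  shows "(\<Sum>\<tau>\<in>Q. quot (restr P \<tau>) (restr M \<tau>)) = quot P M"
proof -
  have "M \<in> NCP n" and M_coarse: "refines M Q"
    using M interval_eq[OF P] by auto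
  then have M_part: "partition_on {1..n} M" and "finite M"
    using NCP_partition_on finite_NCP_element by auto
  have Q_part: "partition_on {1..n} Q" and "finite Q"
    using NCP_partition_on[OF Q] finite_NCP_element[OF Q] .
  have "(\<Sum>\<tau>\<in>Q. quot (restr P \<tau>) (restr M \<tau>)) = (\<Sum>\<tau>\<in>Q. \<Sum>\<sigma>\<in>{\<sigma> \<in> M. \<sigma> \<subseteq> \<tau>}. {#restr P \<sigma>#})"
    using quot_restr_refined_block[OF M_part M_coarse _ finite_NCP_block[OF Q] \<open>finite M\<close>] by simp
  also have "\<dots> = (\<Sum>\<sigma>\<in>(\<Union>\<tau>\<in>Q. {\<sigma> \<in> M. \<sigma> \<subseteq> \<tau>}). {#restr P \<sigma>#})"
  proof (rule sum.UNION_disjoint[OF \<open>finite Q\<close>, symmetric])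
    show "\<forall>\<tau>\<in>Q. \<forall>\<tau>'\<in>Q. \<tau> \<noteq> \<tau>' \<longrightarrow> {\<sigma> \<in> M. \<sigma> \<subseteq> \<tau>} \<inter> {\<sigma> \<in> M. \<sigma> \<subseteq> \<tau>'} = {}"
      using blocks_within_disjoint[OF M_part Q_part] by blast
  qed (simp add: \<open>finite M\<close>)
  also have "(\<Union>\<tau>\<in>Q. {\<sigma> \<in> M. \<sigma> \<subseteq> \<tau>}) = M"
    by (rule UN_blocks_within[OF M_part Q_part M_coarse])
  finally show ?thesis
    using quot_eq_sum[OF \<open>finite M\<close>] by simp
qed

lemma opd_delta_mono_quot_expand:
  assumes P: "P \<in> NCP n" and Q: "Q \<in> NCP n"
  shows "(opd_delta_mono (quot P Q) :: _ \<Rightarrow>\<^sub>0 'k::comm_semiring_1) =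
    (\<Sum>g\<in>(\<Pi>\<^sub>E \<tau>\<in>Q. coarsenings (restr P \<tau>) (card \<tau>)).
       Poly_Mapping.single (\<Sum>\<tau>\<in>Q. ({#g \<tau>#}, quot (restr P \<tau>) (g \<tau>))) 1)"
proof -
  have "finite Q"
    by (rule finite_NCP_element[OF Q])
  have gen: "opd_delta_gen (restr P \<tau>) =
      (\<Sum>R\<in>coarsenings (restr P \<tau>) (card \<tau>). Poly_Mapping.single ({#R#}, quot (restr P \<tau>) R) (1::'k))"
    if \<tau>: "\<tau> \<in> Q" for \<tau>
  proof -
    have "restr P \<tau> \<in> NCP (card \<tau>)"
      by (rule NCP_restr[OF P NCP_block_subset[OF Q \<tau>]])
    then show ?thesis
      unfolding opd_delta_gen_def coarsenings_def by (simp add: card_Union_NCP)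
  qed
  have "(opd_delta_mono (quot P Q) :: _ \<Rightarrow>\<^sub>0 'k) = (\<Prod>\<tau>\<in>Q. opd_delta_gen (restr P \<tau>))"
    unfolding opd_delta_mono_def quot_def
    by (simp add: prod_unfold_prod_mset image_mset.compositionality comp_def)
  also have "\<dots> = (\<Prod>\<tau>\<in>Q. \<Sum>R\<in>coarsenings (restr P \<tau>) (card \<tau>).
                     Poly_Mapping.single ({#R#}, quot (restr P \<tau>) R) 1)"
    using gen by simp
  also have "\<dots> = (\<Sum>g\<in>(\<Pi>\<^sub>E \<tau>\<in>Q. coarsenings (restr P \<tau>) (card \<tau>)).
                     \<Prod>\<tau>\<in>Q. Poly_Mapping.single ({#g \<tau>#}, quot (restr P \<tau>) (g \<tau>)) 1)"
    by (rule prod_sum_PiE[OF \<open>finite Q\<close> finite_coarsenings])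
  finally show ?thesis
    by (simp add: prod_single_one)
qed

lemma opd_delta_mono_quot:
  assumes P: "P \<in> NCP n" and Q: "Q \<in> NCP n" and "refines P Q"
  shows "(opd_delta_mono (quot P Q) :: _ \<Rightarrow>\<^sub>0 'k::comm_semiring_1) = Phi_tensor (lat_delta_basis (P, Q))"
proof -
  have sum_eq: "(\<Sum>\<tau>\<in>Q. ({#restr M \<tau>#}, quot (restr P \<tau>) (restr M \<tau>))) = (quot M Q, quot P M)"
    if "M \<in> interval P Q" for M
    unfolding sum_prod using quot_eq_sum[OF finite_NCP_element[OF Q]] sum_quot_restr[OF P Q that]
    by simp
  have "(opd_delta_mono (quot P Q) :: _ \<Rightarrow>\<^sub>0 'k) =
     (\<Sum>M\<in>interval P Q. Poly_Mapping.single (\<Sum>\<tau>\<in>Q. ({#restr M \<tau>#}, quot (restr P \<tau>) (restr M \<tau>))) 1)"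
    unfolding opd_delta_mono_quot_expand[OF P Q]
    by (subst sum.reindex_bij_betw[OF restr_interval_bij[OF assms], symmetric]) simp
  also have "\<dots> = (\<Sum>M\<in>interval P Q. Poly_Mapping.single (quot M Q, quot P M) 1)"
    using sum_eq by simp
  also have "\<dots> = Phi_tensor (lat_delta_basis (P, Q))"
    unfolding lat_delta_basis_def Phi_tensor_def by (simp add: lin_ext_sum)
  finally show ?thesis .
qed

lemma card_restr_eq_1_iff:
  assumes "partition_on A P" "refines P Q" "\<tau> \<in> Q" "finite \<tau>"
  shows "card (restr P \<tau>) = 1 \<longleftrightarrow> \<tau> \<in> P"
proof -
  have "card {B \<in> P. B \<subseteq> \<tau>} = 1 \<longleftrightarrow> \<tau> \<in> P"
  proof
    assume "card {B \<in> P. B \<subseteq> \<tau>} = 1"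
    then obtain B0 where B0: "{B \<in> P. B \<subseteq> \<tau>} = {B0}"
      by (rule card_1_singletonE)
    obtain S where S: "S \<subseteq> P" "\<tau> = \<Union>S"
      using assms(2,3) unfolding refines_def by auto
    then have "S \<subseteq> {B0}"
      unfolding B0[symmetric] by auto
    then have "\<tau> \<subseteq> B0"
      using S(2) by auto
    moreover have "B0 \<in> P" "B0 \<subseteq> \<tau>"
      using B0 by auto
    ultimately show "\<tau> \<in> P"
      by (simp add: subset_antisym)
  next
    assume "\<tau> \<in> P"
    have "B = \<tau>" if "B \<in> P" "B \<subseteq> \<tau>" for B
      using partition_on_block_unique[OF assms(1) that(1) \<open>\<tau> \<in> P\<close> _ subset_refl that(2)]
        partition_onD3[OF assms(1)] that(1) by auto
    then have "{B \<in> P. B \<subseteq> \<tau>} = {\<tau>}"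
      using \<open>\<tau> \<in> P\<close> by auto
    then show "card {B \<in> P. B \<subseteq> \<tau>} = 1"
      by simp
  qed
  then show ?thesis
    using card_restr_refined_block[OF assms] by simp
qed

lemma opd_eps_quot:
  assumes P: "P \<in> NCP n" and Q: "Q \<in> NCP n" and PQ: "refines P Q"
  shows "prod_mset (image_mset opd_eps_gen (quot P Q)) = (if P = Q then 1 else (0::'k::comm_semiring_1))"
proof -
  have P_part: "partition_on {1..n} P"
    by (rule NCP_partition_on[OF P])
  have "prod_mset (image_mset opd_eps_gen (quot P Q)) = (\<Prod>\<tau>\<in>Q. (opd_eps_gen (restr P \<tau>) :: 'k))"
    unfolding quot_def by (simp add: prod_unfold_prod_mset image_mset.compositionality comp_def)
  also have "\<dots> = (\<Prod>\<tau>\<in>Q. if \<tau> \<in> P then 1 else 0)"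
    unfolding opd_eps_gen_def
    using card_restr_eq_1_iff[OF P_part PQ _ finite_NCP_block[OF Q]] by simp
  also have "\<dots> = (if Q \<subseteq> P then 1 else 0)"
  proof (cases "Q \<subseteq> P")
    case False
    then have "(\<Prod>\<tau>\<in>Q. if \<tau> \<in> P then 1 else 0) = (0::'k)"
      using finite_NCP_element[OF Q] by (intro prod_zero) auto
    then show ?thesis
      using False by simp
  qed (auto intro!: prod.neutral)
  also have "Q \<subseteq> P \<longleftrightarrow> P = Q"
    using partition_on_eq_if_subset[OF P_part NCP_partition_on[OF Q]] by blast
  finally show ?thesis .
qed

theorem mainTheorem6:
  fixes x :: "(ptn \<times> ptn) \<Rightarrow>\<^sub>0 'k::field"
  assumes "Poly_Mapping.keys x \<subseteq> lat_basis"
  shows "opd_delta (Phi x) = Phi_tensor (lat_delta x) \<and> opd_eps (Phi x) = lat_eps x"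
proof
  have "opd_delta (Phi x) = lin_ext (\<lambda>(P, Q). opd_delta_mono (quot P Q)) x"
    unfolding opd_delta_def Phi_def lin_ext_lin_ext by (rule lin_ext_cong) (simp add: split_beta)
  also have "\<dots> = lin_ext (\<lambda>I. Phi_tensor (lat_delta_basis I)) x"
    using assms opd_delta_mono_quot by (intro lin_ext_cong) (auto simp: lat_basis_def)
  also have "\<dots> = Phi_tensor (lat_delta x)"
    unfolding lat_delta_def Phi_tensor_def lin_ext_lin_ext ..
  finally show "opd_delta (Phi x) = Phi_tensor (lat_delta x)" .
next
  have "opd_eps (Phi x) = lin_fun (\<lambda>(P, Q). prod_mset (image_mset opd_eps_gen (quot P Q))) x"
    unfolding opd_eps_def Phi_def lin_fun_lin_ext by (rule lin_fun_cong) (simp add: split_beta)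
  also have "\<dots> = lat_eps x"
    unfolding lat_eps_def using assms opd_eps_quot by (intro lin_fun_cong) (auto simp: lat_basis_def)
  finally show "opd_eps (Phi x) = lat_eps x" .
qed

end
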